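(* For every $*$-term $P$, there exist $X\in\mathcal T_{A,\triangle}$ and $Y\in\mathcal T_A$ such that $se(P)=X[\triangle\mapsto Y]$, $X$ contains a leaf $\triangle$ (possibly $X=\triangle$), and $Y=se(R)$ where $R$ is the rightmost $\ell$-term in $P$.
   Context: Let $A$ be a nonempty set of atoms; terms are closed terms over constants $\mathsf T,\mathsf F$, atoms $a\in A$, unary $\neg$, binary $\land^\circ$, $\lor^\circ$. Evaluation trees $\mathcal T_A$: $\mathsf T,\mathsf F\in\mathcal T_A$ and $(X\unlhd a\unrhd Y)\in\mathcal T_A$ for $X,Y\in\mathcal T_A$, $a\in A$. $\mathcal T_{A,\triangle}$ is defined in the same way but with leaves in $\{\mathsf T,\mathsf F,\triangle\}$ (so $\mathcal T_A\subseteq\mathcal T_{A,\triangle}$). Leaf replacement $X[\ell_1\mapsto Y_1,\ldots]$ replaces every leaf labelled $\ell_i$ by $Y_i$ (recursively: a leaf $\ell_i$ becomes $Y_i$, other leaves unchanged, and $(X_1\unlhd a\unrhd X_2)[\ldots]=X_1[\ldots]\unlhd a\unrhd X_2[\ldots]$). $se$: $se(\mathsf T)=\mathsf T$, $se(\mathsf F)=\mathsf F$, $se(a)=\mathsf T\unlhd a\unrhd\mathsf F$, $se(\neg P)=se(P)[\mathsf T\mapsto\mathsf F,\mathsf F\mapsto\mathsf T]$, $se(P\land^\circ Q)=se(P)[\mathsf T\mapsto se(Q)]$, $se(P\lor^\circ Q)=se(P)[\mathsf F\mapsto se(Q)]$. Syntactic categories ($a\in A$): $\mathsf T$-terms $P^{\mathsf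 T}::=\mathsf T\mid(a\land^\circ P^{\mathsf T})\lor^\circ P^{\mathsf T}$; $\mathsf F$-terms $P^{\mathsf F}::=\mathsf F\mid(a\lor^\circ P^{\mathsf F})\land^\circ P^{\mathsf F}$; $\ell$-terms $P^\ell::=(a\land^\circ P^{\mathsf T})\lor^\circ P^{\mathsf F}\mid(\neg a\land^\circ P^{\mathsf T})\lor^\circ P^{\mathsf F}$; $*$-terms $P^*::=P^c\mid P^d$, $P^c::=P^\ell\mid P^*\land^\circ P^d$, $P^d::=P^\ell\mid P^*\lor^\circ P^c$. A $*$-term is thus built from $\ell$-terms by $\land^\circ$ and $\lor^\circ$; its rightmost $\ell$-term is the last of these $\ell$-terms read from left to right. *)

theory Defs
  imports Main
begin

datatype 'a trm = TT | FF | Atom 'a | Neg "'a trm" | LAnd "'a trm" "'a trm" | LOr "'a trm" "'a trm"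

text \<open>Evaluation trees with leaves T, F and triangle; T_A consists of the triangle-free ones.\<close>
datatype 'a etree = LT | LF | LTri | Node "'a etree" 'a "'a etree"

fun no_tri :: "'a etree \<Rightarrow> bool" where
  "no_tri LTri = False"
| "no_tri (Node X a Y) = (no_tri X \<and> no_tri Y)"
| "no_tri _ = True"

fun has_tri :: "'a etree \<Rightarrow> bool" where
  "has_tri LTri = True"
| "has_tri (Node X a Y) = (has_tri X \<or> has_tri Y)"
| "has_tri _ = False"

text \<open>Simultaneous leaf replacement X[T |-> t, F |-> f, triangle |-> d].\<close>
fun repl :: "'a etree \<Rightarrow> 'a etree \<Rightarrow> 'a etree \<Rightarrow> 'a etree \<Rightarrow> 'a etree" where
  "repl t f d LT = t"
| "repl t f d LF = f"
| "repl t f d LTri = d"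
| "repl t f d (Node X a Y) = Node (repl t f d X) a (repl t f d Y)"

fun se :: "'a trm \<Rightarrow> 'a etree" where
  "se TT = LT"
| "se FF = LF"
| "se (Atom a) = Node LT a LF"
| "se (Neg P) = repl LF LT LTri (se P)"
| "se (LAnd P Q) = repl (se Q) LF LTri (se P)"
| "se (LOr P Q) = repl LT (se Q) LTri (se P)"

inductive is_T :: "'a trm \<Rightarrow> bool" where
  T_T: "is_T TT"
| T_step: "is_T P \<Longrightarrow> is_T Q \<Longrightarrow> is_T (LOr (LAnd (Atom a) P) Q)"

inductive is_F :: "'a trm \<Rightarrow> bool" where
  F_F: "is_F FF"
| F_step: "is_F P \<Longrightarrow> is_F Q \<Longrightarrow> is_F (LAnd (LOr (Atom a) P) Q)"

inductive is_l :: "'a trm \<Rightarrow> bool" where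
  l_pos: "is_T P \<Longrightarrow> is_F Q \<Longrightarrow> is_l (LOr (LAnd (Atom a) P) Q)"
| l_neg: "is_T P \<Longrightarrow> is_F Q \<Longrightarrow> is_l (LOr (LAnd (Neg (Atom a)) P) Q)"

inductive is_star :: "'a trm \<Rightarrow> bool" and is_c :: "'a trm \<Rightarrow> bool" and is_d :: "'a trm \<Rightarrow> bool" where
  star_c: "is_c P \<Longrightarrow> is_star P"
| star_d: "is_d P \<Longrightarrow> is_star P"
| c_l: "is_l P \<Longrightarrow> is_c P"
| c_and: "is_star P \<Longrightarrow> is_d Q \<Longrightarrow> is_c (LAnd P Q)"
| d_l: "is_l P \<Longrightarrow> is_d P"
| d_or: "is_star P \<Longrightarrow> is_c Q \<Longrightarrow> is_d (LOr P Q)"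

function rightmost :: "'a trm \<Rightarrow> 'a trm" where
  "rightmost P = (if is_l P then P else
     (case P of LAnd _ Q \<Rightarrow> rightmost Q | LOr _ Q \<Rightarrow> rightmost Q | _ \<Rightarrow> P))"
  by auto
termination
  by (relation "measure size") (auto split: trm.splits if_splits)

end

theory Submission
  imports Defs
begin

text \<open>The evaluation tree of a *-term \<open>P\<close> is built from that of its rightmost
  \<open>\<ell>\<close>-term \<open>R\<close>: this holds trivially with \<open>X = \<triangle>\<close> when \<open>P = R\<close> is an \<open>\<ell>\<close>-term.
  For \<open>P \<and>\<^sup>\<circ> Q\<close> one has \<open>se(P \<and>\<^sup>\<circ> Q) = se(P)[T \<mapsto> se(Q)]\<close>, so if \<open>se(Q) = X[\<triangle> \<mapsto> se(R)]\<close>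
  then \<open>se(P \<and>\<^sup>\<circ> Q) = se(P)[T \<mapsto> X][\<triangle> \<mapsto> se(R)]\<close>, and \<open>se(P)[T \<mapsto> X]\<close> still contains \<open>\<triangle>\<close>
  because \<open>se(P)\<close> has a \<open>T\<close>-leaf (every *-term can evaluate to both truth values).
  Disjunction is symmetric with \<open>F\<close>; the only syntactic subtlety is that \<open>P \<or>\<^sup>\<circ> Q\<close>
  with \<open>Q\<close> a conjunctive *-term is never itself an \<open>\<ell>\<close>-term, since \<open>F\<close>-terms are not *-terms.\<close>

fun leaves :: "'a etree \<Rightarrow> 'a etree set" where
  "leaves (Node X a Y) = leaves X \<union> leaves Y"
| "leaves L = {L}"

lemma leaves_repl:
  "leaves (repl t f d X) =
     (if LT \<in> leaves X then leaves t else {}) \<union> (if LF \<in> leaves X then leaves f else {})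
   \<union> (if LTri \<in> leaves X then leaves d else {})"
  by (induction X) auto

lemma has_tri_iff_leaves: "has_tri X \<longleftrightarrow> LTri \<in> leaves X"
  by (induction X) auto

lemma no_tri_iff_leaves: "no_tri X \<longleftrightarrow> LTri \<notin> leaves X"
  by (induction X) auto

lemma repl_repl:
  "repl a b c (repl t f d X) = repl (repl a b c t) (repl a b c f) (repl a b c d) X"
  by (induction X) auto

lemma repl_tri_irrelevant: "LTri \<notin> leaves X \<Longrightarrow> repl t f d X = repl t f d' X"
  by (induction X) auto

lemma LTri_notin_leaves_se: "LTri \<notin> leaves (se P)"
  by (induction P) (auto simp: leaves_repl)

lemma is_star_induct[consumes 1, case_names l LAnd LOr]:
  assumes "is_star P"
    and l: "\<And>P. is_l P \<Longrightarrow> \<Phi> P"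
    and LAnd: "\<And>P Q. is_star P \<Longrightarrow> \<Phi> P \<Longrightarrow> is_d Q \<Longrightarrow> \<Phi> Q \<Longrightarrow> \<Phi> (LAnd P Q)"
    and LOr: "\<And>P Q. is_star P \<Longrightarrow> \<Phi> P \<Longrightarrow> is_c Q \<Longrightarrow> \<Phi> Q \<Longrightarrow> \<Phi> (LOr P Q)"
  shows "\<Phi> P"
proof -
  have "(is_star P \<longrightarrow> \<Phi> P) \<and> (is_c Q \<longrightarrow> \<Phi> Q) \<and> (is_d R \<longrightarrow> \<Phi> R)" for P Q R :: "'a trm"
    by (induction rule: is_star_is_c_is_d.induct[of _ _ _ P Q R]) (auto intro: l LAnd LOr)
  with \<open>is_star P\<close> show ?thesis by blast
qed

lemma is_F_not_is_d: "is_F P \<Longrightarrow> \<not> is_d P"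
  by (auto elim: is_F.cases is_d.cases is_l.cases)

lemma is_F_not_is_c: "is_F P \<Longrightarrow> \<not> is_c P"
proof
  assume "is_c P" and "is_F P"
  then show False
    by cases (auto elim: is_F.cases is_l.cases dest: is_F_not_is_d)
qed

declare rightmost.simps [simp del]

lemma rightmost_is_l: "is_l P \<Longrightarrow> rightmost P = P"
  by (subst rightmost.simps) simp

lemma rightmost_LAnd: "rightmost (LAnd P Q) = rightmost Q"
  by (subst rightmost.simps) (auto elim: is_l.cases)

lemma rightmost_LOr: "is_c Q \<Longrightarrow> rightmost (LOr P Q) = rightmost Q"
  by (subst rightmost.simps) (auto elim: is_l.cases dest: is_F_not_is_c)

lemma LT_in_leaves_se_is_T: "is_T P \<Longrightarrow> LT \<in> leaves (se P)"
  by (induction rule: is_T.induct) (auto simp: leaves_repl)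

lemma LF_in_leaves_se_is_F: "is_F P \<Longrightarrow> LF \<in> leaves (se P)"
  by (induction rule: is_F.induct) (auto simp: leaves_repl)

lemma LT_LF_in_leaves_se_is_star:
  "is_star P \<Longrightarrow> LT \<in> leaves (se P) \<and> LF \<in> leaves (se P)"
proof (induction rule: is_star_induct)
  case (l P)
  then show ?case
    by (cases rule: is_l.cases)
       (auto simp: leaves_repl dest: LT_in_leaves_se_is_T LF_in_leaves_se_is_F)
qed (auto simp: leaves_repl)

definition tri_plug :: "'a etree \<Rightarrow> 'a etree \<Rightarrow> bool" where
  "tri_plug Y Z \<longleftrightarrow> (\<exists>X. has_tri X \<and> Z = repl LT LF Y X)"

lemma tri_plug_refl: "tri_plug Y Y"
  unfolding tri_plug_def by (intro exI[of _ LTri]) simp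

lemma tri_plug_repl_LT:
  assumes "tri_plug Y Z" and "LT \<in> leaves W" and "LTri \<notin> leaves W"
  shows "tri_plug Y (repl Z LF LTri W)"
proof -
  obtain X where X: "has_tri X" "Z = repl LT LF Y X"
    using assms(1) unfolding tri_plug_def by blast
  have "repl LT LF Y (repl X LF LTri W) = repl Z LF Y W"
    by (simp add: repl_repl X(2))
  also have "\<dots> = repl Z LF LTri W"
    using assms(3) by (rule repl_tri_irrelevant)
  finally show ?thesis
    unfolding tri_plug_def using X(1) assms(2)
    by (intro exI[of _ "repl X LF LTri W"]) (auto simp: has_tri_iff_leaves leaves_repl)
qed

lemma tri_plug_repl_LF:
  assumes "tri_plug Y Z" and "LF \<in> leaves W" and "LTri \<notin> leaves W"
  shows "tri_plug Y (repl LT Z LTri W)"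
proof -
  obtain X where X: "has_tri X" "Z = repl LT LF Y X"
    using assms(1) unfolding tri_plug_def by blast
  have "repl LT LF Y (repl LT X LTri W) = repl LT Z Y W"
    by (simp add: repl_repl X(2))
  also have "\<dots> = repl LT Z LTri W"
    using assms(3) by (rule repl_tri_irrelevant)
  finally show ?thesis
    unfolding tri_plug_def using X(1) assms(2)
    by (intro exI[of _ "repl LT X LTri W"]) (auto simp: has_tri_iff_leaves leaves_repl)
qed

lemma tri_plug_se_rightmost: "is_star P \<Longrightarrow> tri_plug (se (rightmost P)) (se P)"
proof (induction rule: is_star_induct)
  case (l P)
  then show ?case by (simp add: rightmost_is_l tri_plug_refl)
next
  case (LAnd P Q)
  then show ?case
    by (simp add: rightmost_LAnd tri_plug_repl_LT LT_LF_in_leaves_se_is_star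
        LTri_notin_leaves_se)
next
  case (LOr P Q)
  then show ?case
    by (simp add: rightmost_LOr tri_plug_repl_LF LT_LF_in_leaves_se_is_star
        LTri_notin_leaves_se)
qed

theorem lemma3p2:
  fixes P :: "'a trm"
  assumes "is_star P"
  shows "\<exists>X Y. se P = repl LT LF Y X \<and> has_tri X \<and> no_tri Y \<and> Y = se (rightmost P)"
proof -
  obtain X where "has_tri X" "se P = repl LT LF (se (rightmost P)) X"
    using tri_plug_se_rightmost[OF assms] unfolding tri_plug_def by blast
  moreover have "no_tri (se (rightmost P))"
    by (simp add: no_tri_iff_leaves LTri_notin_leaves_se)
  ultimately show ?thesis by blast
qed

end
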